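(* Let $\gamma>0$, $y>0$, $x_1\ge0$, $\sigma\ge0$ be real with $y+4x_1+\sigma/\gamma<1$, and assume (C1) $\sigma/\gamma\le y/(q-1)$; (C2) $2x_1(y+\sigma/\gamma+2x_1)^2<(1-y-\sigma/\gamma-4x_1)^2(y+\sigma/\gamma)$; (C3) $\frac\sigma\gamma(1-y)<y^2$. Then $$I_{y,x_1}(\sigma)=S(\sigma,y,0,2x_1)=E(2x_1)+(1-2x_1)E\Bigl(\frac{y+2x_1}{1-2x_1}\Bigr)+\Bigl(y+\frac\sigma\gamma+2x_1\Bigr)E\Bigl(\frac{y+2x_1}{y+\sigma/\gamma+2x_1}\Bigr).$$
   Context: $E(x)=-x\log_qx-(1-x)\log_q(1-x)$ for $0<x<1$, $E(0)=E(1)=0$. $S(\sigma,y,x,t_1)=E(t_1)+(1-t_1)E\bigl(\frac{y+x+t_1}{1-t_1}\bigr)+Z$, where $Z=(y+\sigma/\gamma+t_1)E\bigl(\frac{y+x+t_1}{y+\sigma/\gamma+t_1}\bigr)$ if $\frac{y+x+t_1}{y+\sigma/\gamma+t_1}\ge1-\frac1q$ and $Z=(y+\sigma/\gamma+t_1)-(y+x+t_1)\log_q(q-1)$ otherwise. $I_{y,x_1}(\sigma)=\max S(\sigma,y,x,t_1)$ over real $0\le t_1\le2x_1$, $0\le x\le\sigma/\gamma$. *)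

theory Defs
  imports "HOL-Analysis.Analysis"
begin

text \<open>q-ary entropy function; q is the alphabet size (natural number, q \<ge> 2).
  Outside the open interval (0,1) it is set to 0 (the paper only defines it on [0,1]).\<close>
definition Hq :: "nat \<Rightarrow> real \<Rightarrow> real" where
  "Hq q x = (if 0 < x \<and> x < 1
             then - x * log (real q) x - (1 - x) * log (real q) (1 - x) else 0)"

definition Zq :: "nat \<Rightarrow> real \<Rightarrow> real \<Rightarrow> real \<Rightarrow> real \<Rightarrow> real \<Rightarrow> real" where
  "Zq q \<gamma> \<sigma> y x t1 =
    (if (y + x + t1) / (y + \<sigma>/\<gamma> + t1) \<ge> 1 - 1 / real q
     then (y + \<sigma>/\<gamma> + t1) * Hq q ((y + x + t1) / (y + \<sigma>/\<gamma> + t1))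
     else (y + \<sigma>/\<gamma> + t1) - (y + x + t1) * log (real q) (real q - 1))"

definition Sfun :: "nat \<Rightarrow> real \<Rightarrow> real \<Rightarrow> real \<Rightarrow> real \<Rightarrow> real \<Rightarrow> real" where
  "Sfun q \<gamma> \<sigma> y x t1 =
     Hq q t1 + (1 - t1) * Hq q ((y + x + t1) / (1 - t1)) + Zq q \<gamma> \<sigma> y x t1"

definition Svals :: "nat \<Rightarrow> real \<Rightarrow> real \<Rightarrow> real \<Rightarrow> real \<Rightarrow> real set" where
  "Svals q \<gamma> \<sigma> y x1 =
     {Sfun q \<gamma> \<sigma> y x t1 | x t1. 0 \<le> t1 \<and> t1 \<le> 2 * x1 \<and> 0 \<le> x \<and> x \<le> \<sigma> / \<gamma>}"

definition Ifun :: "nat \<Rightarrow> real \<Rightarrow> real \<Rightarrow> real \<Rightarrow> real \<Rightarrow> real" where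
  "Ifun q \<gamma> y x1 \<sigma> = Sup (Svals q \<gamma> \<sigma> y x1)"

end

theory Submission
  imports Defs "HOL-Real_Asymp.Real_Asymp"
begin

text \<open>Under (C1) the function Zq is always in its entropy branch, so ln q times S is a
  signed sum of terms u ln u with u affine in x and t. Its partial derivative in x is
  ln ((1-y-x-2t)(\<sigma>/\<gamma>-x) / (y+x+t)^2), which is at most 0 by (C3), so the maximum is
  at x = 0; there the partial derivative in t is ln ((1-y-2t)^2 (y+\<sigma>/\<gamma>+t) / (t (y+t)^2)),
  which is at least 0 for t \<le> 2 x1 by (C2), so the maximum is at t = 2 x1.\<close>

definition xlnx :: "real \<Rightarrow> real" where
  "xlnx a = a * ln a"

lemma xlnx_tendsto_0: "(xlnx \<longlongrightarrow> 0) (at_right 0)"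
  unfolding xlnx_def by real_asymp

lemma continuous_on_xlnx: "continuous_on {0..} xlnx"
  unfolding continuous_on_def
proof (intro ballI)
  fix a :: real assume "a \<in> {0..}"
  show "(xlnx \<longlongrightarrow> xlnx a) (at a within {0..})"
  proof (cases "a = 0")
    case True
    then show ?thesis
      using xlnx_tendsto_0 by (simp add: xlnx_def at_within_Ici_at_right)
  next
    case False
    then have "isCont xlnx a"
      unfolding xlnx_def by (intro continuous_intros) auto
    then show ?thesis
      by (metis continuous_at_imp_continuous_at_within continuous_within)
  qed
qed

lemma continuous_on_xlnx_comp [continuous_intros]:
  assumes "continuous_on S f" "\<And>x. x \<in> S \<Longrightarrow> f x \<ge> 0"
  shows "continuous_on S (\<lambda>x. xlnx (f x))"
  using continuous_on_compose2[OF continuous_on_xlnx assms(1)] assms(2) by auto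

lemma has_real_derivative_xlnx_comp [derivative_intros]:
  assumes "(f has_real_derivative f') (at x within S)" "f x > 0"
  shows "((\<lambda>x. xlnx (f x)) has_real_derivative (ln (f x) + 1) * f') (at x within S)"
  unfolding xlnx_def using assms by (auto intro!: derivative_eq_intros simp: field_simps)

lemma mult_Hq_divide:
  assumes "0 < m" "0 \<le> a" "a \<le> m"
  shows "m * Hq q (a / m) = (xlnx m - xlnx a - xlnx (m - a)) / ln q"
proof -
  consider "a = 0" | "a = m" | "0 < a" "a < m"
    using assms by linarith
  then show ?thesis
  proof cases
    case 3
    then have "0 < a / m" "a / m < 1" "1 - a / m = (m - a) / m"
      using assms by (auto simp: field_simps)
    then have "Hq q (a / m) = (- (a/m) * ln (a/m) - ((m-a)/m) * ln ((m-a)/m)) / ln q"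
      by (simp add: Hq_def log_def diff_divide_distrib)
    moreover have "m * (- (a/m) * ln (a/m) - ((m-a)/m) * ln ((m-a)/m)) = xlnx m - xlnx a - xlnx (m - a)"
      using assms 3 by (simp add: ln_div xlnx_def field_simps)
    ultimately show ?thesis
      by simp
  qed (use assms in \<open>simp_all add: Hq_def xlnx_def\<close>)
qed

lemma Zq_eq_entropy:
  assumes "1 < q" "0 < y" "0 \<le> x" "0 \<le> t" "0 \<le> \<sigma>/\<gamma>" "\<sigma>/\<gamma> \<le> y / (real q - 1)"
  shows "Zq q \<gamma> \<sigma> y x t = (y + \<sigma>/\<gamma> + t) * Hq q ((y + x + t) / (y + \<sigma>/\<gamma> + t))"
proof -
  define s where "s = \<sigma>/\<gamma>"
  have "(real q - 1) * s \<le> y"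
    using assms by (simp add: s_def le_divide_eq mult.commute)
  moreover have "0 \<le> real q * x"
    using assms by simp
  ultimately have "(real q - 1) * (y + s + t) \<le> real q * (y + x + t)"
    using \<open>0 \<le> t\<close> by (simp add: algebra_simps)
  then have "1 - 1 / real q \<le> (y + x + t) / (y + s + t)"
    using assms by (simp add: s_def field_simps)
  then show ?thesis
    by (simp add: Zq_def s_def)
qed

text \<open>With s = \<sigma>/\<gamma>, this is ln q times Sfun wherever Zq is in its entropy branch: by
  mult_Hq_divide the xlnx (1 - t) terms cancel and xlnx 1 = 0.\<close>
definition Sfun_scaled :: "real \<Rightarrow> real \<Rightarrow> real \<Rightarrow> real \<Rightarrow> real" where
  "Sfun_scaled s y x t =
     - xlnx t - 2 * xlnx (y + x + t) - xlnx (1 - y - x - 2*t) + xlnx (y + s + t) - xlnx (s - x)"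

lemma Sfun_eq_Sfun_scaled:
  assumes "1 < q" "0 < y" "0 \<le> x" "x \<le> \<sigma>/\<gamma>" "0 \<le> t" "y + \<sigma>/\<gamma> + 2*t \<le> 1"
    and "\<sigma>/\<gamma> \<le> y / (real q - 1)"
  shows "Sfun q \<gamma> \<sigma> y x t = Sfun_scaled (\<sigma>/\<gamma>) y x t / ln q"
proof -
  have "Hq q t = (xlnx 1 - xlnx t - xlnx (1 - t)) / ln q"
    using mult_Hq_divide[of 1 t q] assms by simp
  moreover have "(1 - t) * Hq q ((y + x + t) / (1 - t))
      = (xlnx (1 - t) - xlnx (y + x + t) - xlnx (1 - y - x - 2*t)) / ln q"
    using mult_Hq_divide[of "1 - t" "y + x + t" q] assms by (simp add: algebra_simps)
  moreover have "Zq q \<gamma> \<sigma> y x t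
      = (xlnx (y + \<sigma>/\<gamma> + t) - xlnx (y + x + t) - xlnx (\<sigma>/\<gamma> - x)) / ln q"
    using Zq_eq_entropy[of q y x t \<sigma> \<gamma>] mult_Hq_divide[of "y + \<sigma>/\<gamma> + t" "y + x + t" q] assms
    by (simp add: algebra_simps)
  ultimately show ?thesis
    by (simp add: Sfun_def Sfun_scaled_def xlnx_def add_divide_distrib diff_divide_distrib)
qed

lemma Sfun_scaled_antimono_x:
  assumes "0 < y" "s * (1 - y) < y^2" "0 \<le> t" "y + s + 2*t < 1" "0 \<le> x" "x \<le> s"
  shows "Sfun_scaled s y x t \<le> Sfun_scaled s y 0 t"
proof (rule DERIV_nonpos_imp_decreasing_open[of 0 x "\<lambda>z. Sfun_scaled s y z t"])
  show "continuous_on {0..x} (\<lambda>z. Sfun_scaled s y z t)"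
    unfolding Sfun_scaled_def using assms by (intro continuous_intros) auto
  fix z assume z: "0 < z" "z < x"
  then have pos: "0 < y + z + t" "0 < 1 - y - z - 2*t" "0 < s - z"
    using assms by auto
  have "((\<lambda>z. Sfun_scaled s y z t) has_real_derivative
      ln (1 - y - z - 2*t) + ln (s - z) - 2 * ln (y + z + t)) (at z)"
    unfolding Sfun_scaled_def using pos by (auto intro!: derivative_eq_intros simp: algebra_simps)
  moreover have "ln (1 - y - z - 2*t) + ln (s - z) - 2 * ln (y + z + t) \<le> 0"
  proof -
    have "(1 - y - z - 2*t) * (s - z) \<le> (1 - y) * s"
      using pos assms z by (intro mult_mono) auto
    also have "\<dots> < y^2" using assms by (simp add: mult.commute)
    also have "\<dots> \<le> (y + z + t)^2" using assms z by (intro power_mono) auto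
    finally have "ln ((1 - y - z - 2*t) * (s - z)) \<le> ln ((y + z + t)^2)"
      using pos by simp
    then show ?thesis using pos by (simp add: ln_mult ln_realpow)
  qed
  ultimately show "\<exists>d. ((\<lambda>z. Sfun_scaled s y z t) has_real_derivative d) (at z) \<and> d \<le> 0"
    by blast
qed (use assms in simp)

lemma Sfun_scaled_mono_t:
  assumes "0 < y" "0 \<le> s" "y + s + 2*T < 1" "T * (y + s + T)^2 < (1 - y - s - 2*T)^2 * (y + s)"
    and "0 \<le> t" "t \<le> T"
  shows "Sfun_scaled s y 0 t \<le> Sfun_scaled s y 0 T"
proof (rule DERIV_nonneg_imp_increasing_open[of t T "Sfun_scaled s y 0"])
  show "continuous_on {t..T} (Sfun_scaled s y 0)"
    unfolding Sfun_scaled_def using assms by (intro continuous_intros) auto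
  fix z assume z: "t < z" "z < T"
  then have pos: "0 < z" "0 < y + z" "0 < 1 - y - 2*z" "0 < y + s + z"
    using assms by auto
  have "(Sfun_scaled s y 0 has_real_derivative
      2 * ln (1 - y - 2*z) + ln (y + s + z) - ln z - 2 * ln (y + z)) (at z)"
    unfolding Sfun_scaled_def using pos by (auto intro!: derivative_eq_intros simp: algebra_simps)
  moreover have "0 \<le> 2 * ln (1 - y - 2*z) + ln (y + s + z) - ln z - 2 * ln (y + z)"
  proof -
    have "z * (y + z)^2 \<le> T * (y + s + T)^2"
      using pos z assms by (intro mult_mono power_mono) auto
    also have "\<dots> < (1 - y - s - 2*T)^2 * (y + s)" by fact
    also have "\<dots> \<le> (1 - y - 2*z)^2 * (y + s + z)"
      using pos z assms by (intro mult_mono power_mono) auto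
    finally have "ln (z * (y + z)^2) \<le> ln ((1 - y - 2*z)^2 * (y + s + z))"
      using pos by simp
    then show ?thesis using pos by (simp add: ln_mult ln_realpow)
  qed
  ultimately show "\<exists>d. (Sfun_scaled s y 0 has_real_derivative d) (at z) \<and> 0 \<le> d"
    by blast
qed (use assms in simp)

lemma Sfun_le_Sfun_at_corner:
  assumes "1 < q" "0 < y" "y + \<sigma>/\<gamma> + 2*T < 1"
    and "\<sigma>/\<gamma> \<le> y / (real q - 1)"
    and "\<sigma>/\<gamma> * (1 - y) < y^2"
    and "T * (y + \<sigma>/\<gamma> + T)^2 < (1 - y - \<sigma>/\<gamma> - 2*T)^2 * (y + \<sigma>/\<gamma>)"
    and "0 \<le> x" "x \<le> \<sigma>/\<gamma>" "0 \<le> t" "t \<le> T"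
  shows "Sfun q \<gamma> \<sigma> y x t \<le> Sfun q \<gamma> \<sigma> y 0 T"
proof -
  have "0 < ln (real q)"
    using assms by simp
  have "Sfun q \<gamma> \<sigma> y x t = Sfun_scaled (\<sigma>/\<gamma>) y x t / ln q"
    using assms by (intro Sfun_eq_Sfun_scaled) auto
  also have "\<dots> \<le> Sfun_scaled (\<sigma>/\<gamma>) y 0 t / ln q"
    using assms \<open>0 < ln q\<close> by (intro divide_right_mono Sfun_scaled_antimono_x) auto
  also have "\<dots> \<le> Sfun_scaled (\<sigma>/\<gamma>) y 0 T / ln q"
    using assms \<open>0 < ln q\<close> by (intro divide_right_mono Sfun_scaled_mono_t) auto
  also have "\<dots> = Sfun q \<gamma> \<sigma> y 0 T"
    using assms by (intro Sfun_eq_Sfun_scaled[symmetric]) auto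
  finally show ?thesis .
qed

theorem corollary4p9:
  fixes q :: nat and \<gamma> y x1 \<sigma> :: real
  assumes "q \<ge> 2"
    and "\<gamma> > 0" and "y > 0" and "x1 \<ge> 0" and "\<sigma> \<ge> 0"
    and "y + 4 * x1 + \<sigma> / \<gamma> < 1"
    and C1: "\<sigma> / \<gamma> \<le> y / (real q - 1)"
    and C2: "2 * x1 * (y + \<sigma>/\<gamma> + 2 * x1)^2 < (1 - y - \<sigma>/\<gamma> - 4 * x1)^2 * (y + \<sigma>/\<gamma>)"
    and C3: "\<sigma> / \<gamma> * (1 - y) < y^2"
  shows "Sfun q \<gamma> \<sigma> y 0 (2 * x1) \<in> Svals q \<gamma> \<sigma> y x1
    \<and> (\<forall>s \<in> Svals q \<gamma> \<sigma> y x1. s \<le> Sfun q \<gamma> \<sigma> y 0 (2 * x1))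
    \<and> Ifun q \<gamma> y x1 \<sigma> = Sfun q \<gamma> \<sigma> y 0 (2 * x1)
    \<and> Sfun q \<gamma> \<sigma> y 0 (2 * x1) =
        Hq q (2 * x1) + (1 - 2 * x1) * Hq q ((y + 2 * x1) / (1 - 2 * x1))
        + (y + \<sigma>/\<gamma> + 2 * x1) * Hq q ((y + 2 * x1) / (y + \<sigma>/\<gamma> + 2 * x1))"
proof -
  have "0 \<le> \<sigma>/\<gamma>"
    using assms by simp
  then have max: "Sfun q \<gamma> \<sigma> y 0 (2 * x1) \<in> Svals q \<gamma> \<sigma> y x1"
    using assms unfolding Svals_def by force
  have upper: "\<forall>s \<in> Svals q \<gamma> \<sigma> y x1. s \<le> Sfun q \<gamma> \<sigma> y 0 (2 * x1)"
    unfolding Svals_def using assms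
    by (auto intro!: Sfun_le_Sfun_at_corner[where T = "2 * x1"])
  have "Ifun q \<gamma> y x1 \<sigma> = Sfun q \<gamma> \<sigma> y 0 (2 * x1)"
    unfolding Ifun_def using max upper by (intro cSup_eq_maximum) auto
  moreover have "Zq q \<gamma> \<sigma> y 0 (2 * x1)
      = (y + \<sigma>/\<gamma> + 2 * x1) * Hq q ((y + 2 * x1) / (y + \<sigma>/\<gamma> + 2 * x1))"
    using Zq_eq_entropy[of q y 0 "2 * x1" \<sigma> \<gamma>] \<open>0 \<le> \<sigma>/\<gamma>\<close> assms by simp
  ultimately show ?thesis
    using max upper by (simp add: Sfun_def)
qed

end
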